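(* Let $T$ be an $r$-interval exchange transformation of $[0,1)$ with $\omega(T)=\omega_0$. Then $C_\psi(T)\le\tau(T)\le(r-1)\,\omega_0$. In particular, if $\omega(T)=0$ then $\tau(T)=C_\psi(T)=0$.
   Context: An $r$-interval exchange transformation is given by a permutation $\pi$ of $\{1,\dots,r\}$ and lengths $\ell_i>0$ with $\sum\ell_i=1$: with $s_0=0$, $s_k=\sum_{i\le k}\ell_i$, $I_k=[s_{k-1},s_k)$, $T(x)=x-\sum_{i<k}\ell_i+\sum_{\pi(i')<\pi(k)}\ell_{i'}$ for $x\in I_k$. Let $\oplus,\ominus$ be addition/subtraction mod $1$. $\Delta(T)=\{T(x)\ominus x\}$, $\Delta'(T)=\{u\ominus v:u,v\in\Delta(T)\}$, $\Delta'_n(T)=\bigcup_{k=1}^n\Delta'(T^k)$, $\tau(T)=\limsup_n\frac{\log\operatorname{card}\Delta'_n(T)}{\log n}$. For $n\in\mathbb N$, $D_n(T)=\sup_{x\in[0,1),\,0<a<b<1}\big|\frac1n\sum_{k=0}^{n-1}\theta_{a,b}(T^kx)-(b-a)\big|$, where $\theta_{a,b}$ is the indicator of $(a,b)$, and $\omega(T)=\limsup_{n\to\infty}\frac{\log(nD_n(T))}{\log n}$. With $\lambda$ Lebesgue measure and $\|t\|$ the distance from $t$ to the nearest integer, $C_\psi(T)=\sup\big(\{0\}\cup\{\alpha>0:\liminf_n n^\alpha\|T^nx-T^ny\|=0\text{ for }\lambda\times\lambda\text{-a.e. }(x,y)\}\big)$. *)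

theory Defs
  imports "HOL-Analysis.Analysis" "HOL-Probability.Probability" "HOL-Combinatorics.Permutations"
begin

definition iet_s :: "(nat \<Rightarrow> real) \<Rightarrow> nat \<Rightarrow> real" where
  "iet_s l k = (\<Sum>i\<in>{1..k}. l i)"

definition iet :: "nat \<Rightarrow> (nat \<Rightarrow> nat) \<Rightarrow> (nat \<Rightarrow> real) \<Rightarrow> real \<Rightarrow> real" where
  "iet r \<pi> l x =
     (let k = (THE k. k \<in> {1..r} \<and> iet_s l (k - 1) \<le> x \<and> x < iet_s l k)
      in x - (\<Sum>i\<in>{1..<k}. l i) + (\<Sum>i\<in>{i\<in>{1..r}. \<pi> i < \<pi> k}. l i))"

definition is_iet_data :: "nat \<Rightarrow> (nat \<Rightarrow> nat) \<Rightarrow> (nat \<Rightarrow> real) \<Rightarrow> bool" where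
  "is_iet_data r \<pi> l \<longleftrightarrow> r \<ge> 1 \<and> \<pi> permutes {1..r} \<and> (\<forall>i\<in>{1..r}. l i > 0)
      \<and> (\<Sum>i\<in>{1..r}. l i) = 1"

definition msub :: "real \<Rightarrow> real \<Rightarrow> real" (infixl "\<ominus>" 65) where
  "u \<ominus> v = frac (u - v)"

definition dnint :: "real \<Rightarrow> real" where
  "dnint t = \<bar>t - of_int (round t)\<bar>"

definition Delta :: "(real \<Rightarrow> real) \<Rightarrow> real set" where
  "Delta T = {T x \<ominus> x | x. x \<in> {0..<1}}"

definition Delta' :: "(real \<Rightarrow> real) \<Rightarrow> real set" where
  "Delta' T = {u \<ominus> v | u v. u \<in> Delta T \<and> v \<in> Delta T}"

definition Delta'_n :: "(real \<Rightarrow> real) \<Rightarrow> nat \<Rightarrow> real set" where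
  "Delta'_n T n = (\<Union>k\<in>{1..n}. Delta' (T ^^ k))"

definition tau :: "(real \<Rightarrow> real) \<Rightarrow> ereal" where
  "tau T = limsup (\<lambda>n. ereal (ln (real (card (Delta'_n T n))) / ln (real n)))"

definition discr :: "(real \<Rightarrow> real) \<Rightarrow> nat \<Rightarrow> real" where
  "discr T n = (SUP (x, a, b) \<in> {(x, a, b). x \<in> {0..<1} \<and> 0 < a \<and> a < b \<and> b < 1}.
      \<bar>(1 / real n) * (\<Sum>k<n. indicator {a<..<b} ((T ^^ k) x)) - (b - a)\<bar>)"

definition omega :: "(real \<Rightarrow> real) \<Rightarrow> ereal" where
  "omega T = limsup (\<lambda>n. ereal (ln (real n * discr T n) / ln (real n)))"

definition unit_leb :: "real measure" where
  "unit_leb = restrict_space lborel {0..<1}"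

definition C_psi :: "(real \<Rightarrow> real) \<Rightarrow> ereal" where
  "C_psi T = Sup ({0} \<union> {ereal \<alpha> | \<alpha>. \<alpha> > 0 \<and>
      (AE p in unit_leb \<Otimes>\<^sub>M unit_leb.
         liminf (\<lambda>n. ereal (real n powr \<alpha> * dnint ((T ^^ n) (fst p) - (T ^^ n) (snd p)))) = 0)})"

end

theory Submission
  imports Defs "HOL-Real_Asymp.Real_Asymp"
begin

(*
  Over n steps the orbit of x visits the interval I_j some c_j(x,n) times, so
  T^n x - x = sum_j c_j(x,n) t_j with t_j the translation on I_j. The discrepancy
  D_n controls every c_j(x,n) up to 2 n D_n around n l_j, and the c_j sum to n.
  Hence every element of Delta'(T^n) is, mod 1, an integer combination of the r - 1
  differences t_j - t_r with coefficients of size at most 4 n D_n; if n D_n <= n^b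
  eventually, card Delta'_n <= (C n^b)^(r-1), and tau <= (r-1) omega follows.

  For C_psi <= tau: ||T^n x - T^n y|| = ||x - y + d|| for some d in Delta'(T^n). If
  card Delta'_n <= n^b with b < a, the pairs (x,y) with ||x - y + d|| < 2^(-a j) for
  some d in Delta'_(2^(j+1)) have measure O(2^((b-a) j)); by Borel-Cantelli almost
  every pair eventually satisfies n^a ||T^n x - T^n y|| >= 1. So no exponent a > tau
  enters the supremum defining C_psi.
*)

section \<open>Growth exponents\<close>

lemma eventually_le_powr_if_log_ratio_Limsup_less:
  fixes f :: "nat \<Rightarrow> real"
  assumes "limsup (\<lambda>n. ereal (ln (f n) / ln (real n))) < ereal \<beta>"
  shows "eventually (\<lambda>n. f n \<le> real n powr \<beta>) sequentially"
  using Limsup_lessD[OF assms] eventually_ge_at_top[of 2]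
proof eventually_elim
  case (elim n)
  show ?case
  proof (cases "f n > 0")
    case True
    have "ln (f n) < \<beta> * ln (real n)" using elim by (simp add: field_simps)
    then have "exp (ln (f n)) < exp (\<beta> * ln (real n))" by simp
    then show ?thesis using True elim by (simp add: powr_def)
  qed (use powr_ge_zero[of "real n" \<beta>] in linarith)
qed

lemma log_ratio_Limsup_le_if_le_powr:
  fixes f :: "nat \<Rightarrow> real"
  assumes "C > 0" and "eventually (\<lambda>n. 0 < f n \<and> f n \<le> C * real n powr \<beta>) sequentially"
  shows "limsup (\<lambda>n. ereal (ln (f n) / ln (real n))) \<le> ereal \<beta>"
proof -
  have "eventually (\<lambda>n. ereal (ln (f n) / ln (real n)) \<le> ereal (\<beta> + ln C / ln (real n))) sequentially"
    using assms(2) eventually_ge_at_top[of 2]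
  proof eventually_elim
    case (elim n)
    have "ln (f n) \<le> ln (C * real n powr \<beta>)" using elim assms(1) by simp
    also have "\<dots> = ln C + \<beta> * ln (real n)" using assms(1) elim by (simp add: ln_mult ln_powr)
    finally show ?case using elim by (simp add: field_simps)
  qed
  then have "limsup (\<lambda>n. ereal (ln (f n) / ln (real n))) \<le> limsup (\<lambda>n. ereal (\<beta> + ln C / ln (real n)))"
    by (rule Limsup_mono)
  also have "\<dots> = ereal \<beta>"
  proof (rule lim_imp_Limsup[OF trivial_limit_sequentially])
    have "(\<lambda>n. \<beta> + ln C / ln (real n)) \<longlonglongrightarrow> \<beta>" by real_asymp
    then show "(\<lambda>n. ereal (\<beta> + ln C / ln (real n))) \<longlonglongrightarrow> ereal \<beta>" by (rule tendsto_ereal)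
  qed
  finally show ?thesis .
qed

lemma log_ratio_Limsup_nonneg:
  fixes f :: "nat \<Rightarrow> real"
  assumes "eventually (\<lambda>n. 1 \<le> f n) sequentially"
  shows "0 \<le> limsup (\<lambda>n. ereal (ln (f n) / ln (real n)))"
proof -
  have "eventually (\<lambda>n. 0 \<le> ereal (ln (f n) / ln (real n))) sequentially"
    using assms eventually_ge_at_top[of 2] by eventually_elim simp
  then have "0 \<le> liminf (\<lambda>n. ereal (ln (f n) / ln (real n)))" by (rule Liminf_bounded)
  also have "\<dots> \<le> limsup (\<lambda>n. ereal (ln (f n) / ln (real n)))" by (rule Liminf_le_Limsup) simp
  finally show ?thesis .
qed

lemma bound_by_powr_if_eventually:
  fixes g :: "nat \<Rightarrow> real"
  assumes "eventually (\<lambda>k. g k \<le> real k powr \<beta>) sequentially" "\<beta> \<ge> 0"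
  obtains K where "K \<ge> 0" "\<And>k n. k \<le> n \<Longrightarrow> g k \<le> K + real n powr \<beta>"
proof -
  obtain N where N: "\<And>k. k \<ge> N \<Longrightarrow> g k \<le> real k powr \<beta>"
    using assms(1) unfolding eventually_sequentially by blast
  define K where "K = (\<Sum>k<N. \<bar>g k\<bar>)"
  show ?thesis
  proof
    show "K \<ge> 0" unfolding K_def by (simp add: sum_nonneg)
    fix k n :: nat assume "k \<le> n"
    show "g k \<le> K + real n powr \<beta>"
    proof (cases "k < N")
      case True
      then have "\<bar>g k\<bar> \<le> K" unfolding K_def by (intro member_le_sum) auto
      then show ?thesis by (simp add: add_increasing2)
    next
      case False
      then have "g k \<le> real k powr \<beta>" using N by simp
      also have "\<dots> \<le> real n powr \<beta>" using \<open>k \<le> n\<close> assms(2) by (intro powr_mono2) auto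
      finally show ?thesis using \<open>K \<ge> 0\<close> by simp
    qed
  qed
qed

section \<open>Discrepancy and visit counts\<close>

lemma indicator_average_bounds:
  fixes f :: "nat \<Rightarrow> real"
  shows "0 \<le> (1 / real n) * (\<Sum>k<n. indicator S (f k))"
    and "(1 / real n) * (\<Sum>k<n. indicator S (f k)) \<le> (1::real)"
proof -
  have "(\<Sum>k<n. indicator S (f k) :: real) \<le> (\<Sum>k<n. 1)" by (intro sum_mono) (simp add: indicator_def)
  then show "(1 / real n) * (\<Sum>k<n. indicator S (f k)) \<le> (1::real)"
    by (cases "n = 0") (simp_all add: field_simps)
qed (simp add: sum_nonneg)

lemma indicator_average_deviation_le_1:
  fixes f :: "nat \<Rightarrow> real"
  assumes "0 \<le> c" "c \<le> 1"
  shows "\<bar>(1 / real n) * (\<Sum>k<n. indicator S (f k)) - c\<bar> \<le> 1"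
  using indicator_average_bounds[of n S f] assms by (simp add: abs_le_iff)

lemma deviation_le_discr:
  assumes "x \<in> {0..<1}" "0 < a" "a < b" "b < 1"
  shows "\<bar>(1 / real n) * (\<Sum>k<n. indicator {a<..<b} ((T ^^ k) x)) - (b - a)\<bar> \<le> discr T n"
  unfolding discr_def
proof (rule cSUP_upper2[where x="(x, a, b)"])
  show "bdd_above ((\<lambda>(x, a, b). \<bar>1 / real n * (\<Sum>k<n. indicator {a<..<b} ((T ^^ k) x)) - (b - a)\<bar>) `
      {(x, a, b). x \<in> {0..<1} \<and> 0 < a \<and> a < b \<and> b < 1})"
    by (rule bdd_aboveI[where M=1]) (auto intro!: indicator_average_deviation_le_1[simplified])
qed (use assms in auto)

lemma discr_ge_inverse:
  assumes "n \<ge> 1"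
  shows "1 / real n \<le> discr T n"
proof (rule ccontr)
  assume "\<not> 1 / real n \<le> discr T n"
  then have lt: "discr T n < 1 / real n" by simp
  define \<eta> where "\<eta> = min (1/8) ((1 / real n - discr T n) / 4)"
  have \<eta>_pos: "\<eta> > 0" using lt by (simp add: \<eta>_def)
  have \<eta>_le: "\<eta> \<le> 1/8" unfolding \<eta>_def by (rule min.cobounded1)
  have \<eta>_small: "\<eta> \<le> (1 / real n - discr T n) / 4" unfolding \<eta>_def by (rule min.cobounded2)
  define S where "S = (\<Sum>k<n. indicator {1/2-\<eta><..<1/2+\<eta>} ((T ^^ k) (1/2)) :: real)"
  have "indicator {1/2-\<eta><..<1/2+\<eta>} ((T ^^ 0) (1/2)) \<le> S"
    unfolding S_def using assms by (intro member_le_sum) (auto simp: indicator_def)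
  then have S1: "S \<ge> 1" using \<eta>_pos \<eta>_le by (simp add: indicator_def)
  have "\<bar>(1 / real n) * S - ((1/2+\<eta>) - (1/2-\<eta>))\<bar> \<le> discr T n"
    unfolding S_def using \<eta>_pos \<eta>_le by (intro deviation_le_discr) auto
  moreover have "(1 / real n) * S \<ge> 1 / real n" using S1 assms by (simp add: field_simps)
  ultimately show False using \<eta>_pos \<eta>_small by (auto simp: abs_le_iff)
qed

lemma discr_nonneg: "0 \<le> discr T n"
  using deviation_le_discr[of "1/2" "1/4" "3/4" n T] by simp

lemma omega_nonneg: "0 \<le> omega T"
  unfolding omega_def
proof (rule log_ratio_Limsup_nonneg)
  show "eventually (\<lambda>n. 1 \<le> real n * discr T n) sequentially"
    using eventually_ge_at_top[of 1]
    by eventually_elim (use discr_ge_inverse in \<open>auto simp: field_simps\<close>)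
qed

lemma visits_ge_of_discr:
  assumes "x \<in> {0..<1}" "n \<ge> 1" "0 \<le> c" "c \<le> d" "d \<le> 1"
  shows "real n * (d - c) - real n * discr T n \<le> (\<Sum>k<n. indicator {c..<d} ((T ^^ k) x))"
proof (cases "c = d")
  case True
  have "0 \<le> (\<Sum>k<n. indicator {c..<d} ((T ^^ k) x) :: real)" by (intro sum_nonneg) simp
  then show ?thesis using True discr_nonneg[of T n] by simp
next
  case False
  show ?thesis
  proof (rule field_le_epsilon)
    fix e :: real assume e: "e > 0"
    define \<epsilon> where "\<epsilon> = min (e / (2 * real n)) ((d - c) / 4)"
    have ep1: "\<epsilon> > 0" using e False assms by (simp add: \<epsilon>_def)
    have ep2: "\<epsilon> \<le> e / (2 * real n)" unfolding \<epsilon>_def by (rule min.cobounded1)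
    have ep3: "\<epsilon> \<le> (d - c) / 4" unfolding \<epsilon>_def by (rule min.cobounded2)
    define S where "S = (\<Sum>k<n. indicator {c+\<epsilon><..<d-\<epsilon>} ((T ^^ k) x) :: real)"
    have "\<bar>(1 / real n) * S - ((d-\<epsilon>) - (c+\<epsilon>))\<bar> \<le> discr T n"
      unfolding S_def using ep1 ep3 assms False by (intro deviation_le_discr) auto
    then have "(1 / real n) * S \<ge> (d - c - 2*\<epsilon>) - discr T n" by (auto simp: abs_le_iff)
    then have "S \<ge> real n * (d - c - 2*\<epsilon>) - real n * discr T n"
      using assms by (simp add: field_simps)
    moreover have "real n * (2*\<epsilon>) \<le> e" using ep2 assms by (simp add: field_simps)
    moreover have "S \<le> (\<Sum>k<n. indicator {c..<d} ((T ^^ k) x))"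
      unfolding S_def using ep1 by (intro sum_mono) (auto simp: indicator_def)
    ultimately show "real n * (d - c) - real n * discr T n \<le> (\<Sum>k<n. indicator {c..<d} ((T ^^ k) x)) + e"
      by (simp add: algebra_simps)
  qed
qed

lemma funpow_in_unit_interval:
  fixes T :: "real \<Rightarrow> real"
  assumes "\<And>z. z \<in> {0..<1} \<Longrightarrow> T z \<in> {0..<1}" "x \<in> {0..<1}"
  shows "(T ^^ k) x \<in> {0..<1::real}"
  using assms by (induction k) (auto simp del: atLeastLessThan_iff)

lemma visits_deviation_le_discr:
  assumes self_map: "\<And>z. z \<in> {0..<1} \<Longrightarrow> T z \<in> {0..<1}"
    and "x \<in> {0..<1}" "n \<ge> 1" "0 \<le> c" "c \<le> d" "d \<le> 1"
  shows "\<bar>(\<Sum>k<n. indicator {c..<d} ((T ^^ k) x)) - real n * (d - c)\<bar> \<le> 2 * real n * discr T n"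
proof -
  have low: "real n * (d - c) - real n * discr T n \<le> (\<Sum>k<n. indicator {c..<d} ((T ^^ k) x))"
    using assms(2-6) by (intro visits_ge_of_discr) auto
  have left: "real n * (c - 0) - real n * discr T n \<le> (\<Sum>k<n. indicator {0..<c} ((T ^^ k) x))"
    using assms(2-6) by (intro visits_ge_of_discr) auto
  have right: "real n * (1 - d) - real n * discr T n \<le> (\<Sum>k<n. indicator {d..<1} ((T ^^ k) x))"
    using assms(2-6) by (intro visits_ge_of_discr) auto
  \<comment> \<open>the upper bound comes from the lower bounds for the two complementary intervals\<close>
  have "(\<Sum>k<n. indicator {c..<d} ((T ^^ k) x)) =
     (\<Sum>k<n. 1 - indicator {0..<c} ((T ^^ k) x) - indicator {d..<1} ((T ^^ k) x) :: real)"
  proof (rule sum.cong[OF refl])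
    fix k
    have "(T ^^ k) x \<in> {0..<1}" by (rule funpow_in_unit_interval[OF self_map assms(2)])
    then show "indicator {c..<d} ((T ^^ k) x)
        = (1 - indicator {0..<c} ((T ^^ k) x) - indicator {d..<1} ((T ^^ k) x) :: real)"
      using assms(4-6) by (auto simp: indicator_def)
  qed
  also have "\<dots> = real n - (\<Sum>k<n. indicator {0..<c} ((T ^^ k) x)) - (\<Sum>k<n. indicator {d..<1} ((T ^^ k) x))"
    by (simp add: sum_subtractf)
  finally show ?thesis using low left right by (auto simp: abs_le_iff algebra_simps)
qed

section \<open>Differences mod 1 and the exponent C_psi\<close>

lemma frac_diff_frac: "frac (frac a - frac b) = frac (a - b)"
proof -
  have "frac a - frac b = (a - b) + of_int (\<lfloor>b\<rfloor> - \<lfloor>a\<rfloor>)" by (simp add: frac_def)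
  then show ?thesis by (simp only: frac_add_of_int_right)
qed

lemma dnint_add_of_int: "dnint (t + of_int i) = dnint t"
proof -
  have "round (t + of_int i) = round t + i"
    using floor_add_int[of "t + 1/2" i] by (simp add: round_def algebra_simps)
  then show ?thesis by (simp add: dnint_def)
qed

lemma dnint_funpow_diff:
  assumes "x \<in> {0..<1}" "y \<in> {0..<1}"
  shows "\<exists>\<delta>\<in>Delta' (T ^^ n). dnint ((T ^^ n) x - (T ^^ n) y) = dnint (x - y + \<delta>)"
proof
  define \<delta> where "\<delta> = ((T ^^ n) x \<ominus> x) \<ominus> ((T ^^ n) y \<ominus> y)"
  show "\<delta> \<in> Delta' (T ^^ n)" unfolding \<delta>_def Delta'_def Delta_def using assms by blast
  define u where "u = ((T ^^ n) x - x) - ((T ^^ n) y - y)"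
  have "\<delta> = frac u" unfolding \<delta>_def msub_def u_def by (rule frac_diff_frac)
  then have "x - y + \<delta> = ((T ^^ n) x - (T ^^ n) y) + of_int (- \<lfloor>u\<rfloor>)"
    by (simp add: frac_def u_def)
  then show "dnint ((T ^^ n) x - (T ^^ n) y) = dnint (x - y + \<delta>)"
    by (simp only: dnint_add_of_int)
qed

lemma zero_mem_Delta'_n: "n \<ge> 1 \<Longrightarrow> 0 \<in> Delta'_n T n"
proof -
  assume "n \<ge> 1"
  have "(T ^^ 1) 0 \<ominus> 0 \<in> Delta (T ^^ 1)" unfolding Delta_def by auto
  then have "((T ^^ 1) 0 \<ominus> 0) \<ominus> ((T ^^ 1) 0 \<ominus> 0) \<in> Delta' (T ^^ 1)" unfolding Delta'_def by blast
  then have "0 \<in> Delta' (T ^^ 1)" by (simp add: msub_def)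
  moreover have "1 \<in> {1..n}" using \<open>n \<ge> 1\<close> by simp
  ultimately show ?thesis unfolding Delta'_n_def by blast
qed

lemma Delta'_n_subset_unit_interval: "Delta'_n T n \<subseteq> {0..<1}"
  unfolding Delta'_n_def Delta'_def msub_def by (auto simp: frac_lt_1)

abbreviation unit_square :: "(real \<times> real) measure" where
  "unit_square \<equiv> unit_leb \<Otimes>\<^sub>M unit_leb"

lemma space_unit_leb: "space unit_leb = {0..<1}"
  unfolding unit_leb_def by simp

lemma prob_space_unit_leb: "prob_space unit_leb"
proof (rule prob_spaceI)
  have "emeasure (restrict_space lborel {0..<1::real}) {0..<1} = emeasure lborel {0..<1::real}"
    by (rule emeasure_restrict_space) auto
  then show "emeasure unit_leb (space unit_leb) = 1" by (simp add: space_unit_leb unit_leb_def)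
qed

lemma prob_space_unit_square: "prob_space unit_square"
  by (rule prob_space_pair[OF prob_space_unit_leb prob_space_unit_leb])

lemma space_unit_square: "space unit_square = {0..<1} \<times> {0..<1}"
  by (simp add: space_pair_measure space_unit_leb)

lemma emeasure_unit_leb: "A \<in> sets unit_leb \<Longrightarrow> emeasure unit_leb A = emeasure lborel A"
  using sets.sets_into_space[of A unit_leb] unfolding unit_leb_def
  by (intro emeasure_restrict_space) (auto simp: space_restrict_space)

lemma borel_measurable_dnint [measurable]: "dnint \<in> borel_measurable borel"
  unfolding dnint_def[abs_def] round_def by measurable

lemma borel_measurable_unit_leb_id [measurable]: "(\<lambda>x. x) \<in> borel_measurable unit_leb"
  unfolding unit_leb_def by (intro measurable_restrict_space1 measurable_ident_sets) simp

lemma near_shift_sets [measurable]: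
  "{p \<in> space unit_square. dnint (fst p - snd p + \<delta>) < c} \<in> sets unit_square"
  by measurable

lemma emeasure_near_shift_le:
  assumes "\<delta> \<in> {0..<1}" "0 < c" "c \<le> 1"
  shows "emeasure unit_square {p \<in> space unit_square. dnint (fst p - snd p + \<delta>) < c} \<le> ennreal (8 * c)"
proof -
  let ?H = "{p \<in> space unit_square. dnint (fst p - snd p + \<delta>) < c}"
  interpret U: prob_space unit_leb by (rule prob_space_unit_leb)
  have "emeasure unit_square ?H = (\<integral>\<^sup>+x. emeasure unit_leb (Pair x -` ?H) \<partial>unit_leb)"
    by (rule U.emeasure_pair_measure_alt) measurable
  also have "\<dots> \<le> (\<integral>\<^sup>+x. ennreal (8 * c) \<partial>unit_leb)"
  proof (rule nn_integral_mono)
    fix x assume x: "x \<in> space unit_leb"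
    \<comment> \<open>\<open>x - y + \<delta>\<close> lies in \<open>(-1, 2)\<close>, so it is within \<open>c\<close> of one of the integers \<open>-1, \<dots>, 2\<close>\<close>
    define I where "I m = {x + \<delta> - real_of_int m - c <..< x + \<delta> - real_of_int m + c}" for m :: int
    have sub: "Pair x -` ?H \<subseteq> (\<Union>m\<in>{-1..2}. I m)"
    proof
      fix y assume "y \<in> Pair x -` ?H"
      then have y: "y \<in> {0..<1}" "dnint (x - y + \<delta>) < c"
        using x by (auto simp: space_unit_square space_unit_leb)
      define m where "m = round (x - y + \<delta>)"
      have m: "\<bar>x - y + \<delta> - of_int m\<bar> < c" using y(2) unfolding dnint_def m_def by simp
      moreover have "-1 < x - y + \<delta>" "x - y + \<delta> < 2" using x y assms(1) by (auto simp: space_unit_leb)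
      ultimately have "m \<in> {-1..2}" using assms(3) by auto
      moreover have "y \<in> I m" using m unfolding I_def by (auto simp: abs_less_iff)
      ultimately show "y \<in> (\<Union>m\<in>{-1..2}. I m)" by blast
    qed
    have "Pair x -` ?H \<in> sets unit_leb" by (rule sets_Pair1) measurable
    then have "emeasure unit_leb (Pair x -` ?H) = emeasure lborel (Pair x -` ?H)"
      by (rule emeasure_unit_leb)
    also have "\<dots> \<le> emeasure lborel (\<Union>m\<in>{-1..2}. I m)"
      using sub by (intro emeasure_mono) (auto simp: I_def)
    also have "\<dots> \<le> (\<Sum>m\<in>{-1..2}. emeasure lborel (I m))"
      by (intro emeasure_subadditive_finite) (auto simp: I_def)
    also have "\<dots> = (\<Sum>m\<in>{-1..2::int}. ennreal (2 * c))"
      using assms(2) by (intro sum.cong) (auto simp: I_def)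
    also have "\<dots> = ennreal (8 * c)" using assms(2) by (simp add: ennreal_mult' flip: ennreal_of_nat_eq_real_of_nat)
    finally show "emeasure unit_leb (Pair x -` ?H) \<le> ennreal (8 * c)" .
  qed
  also have "\<dots> = ennreal (8 * c)" using U.emeasure_space_1 by simp
  finally show ?thesis .
qed

lemma of_nat_power_powr: "0 < b \<Longrightarrow> real (b ^ k) powr a = real b powr (real k * a)"
  by (simp add: powr_realpow[symmetric] powr_powr)

lemma AE_eventually_far_from_Delta'_n:
  assumes fin: "\<And>n. finite (Delta'_n T n)"
    and card: "eventually (\<lambda>n. real (card (Delta'_n T n)) \<le> real n powr \<beta>) sequentially"
    and "\<beta> < \<alpha>" "0 < \<alpha>"
  shows "AE p in unit_square. eventually (\<lambda>j. \<forall>\<delta>\<in>Delta'_n T (2 ^ Suc j).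
           2 powr (- \<alpha> * real j) \<le> dnint (fst p - snd p + \<delta>)) sequentially"
proof -
  interpret P: prob_space unit_square by (rule prob_space_unit_square)
  define t where "t j = (2::real) powr (- \<alpha> * real j)" for j
  have t: "0 < t j" "t j \<le> 1" for j
  proof -
    have "(2::real) powr (- \<alpha> * real j) \<le> 2 powr 0" using \<open>0 < \<alpha>\<close> by (intro powr_mono) auto
    then show "0 < t j" "t j \<le> 1" by (simp_all add: t_def)
  qed
  define G where "G j = (\<Union>\<delta>\<in>Delta'_n T (2 ^ Suc j). {p \<in> space unit_square. dnint (fst p - snd p + \<delta>) < t j})" for j
  have G_sets: "G j \<in> sets unit_square" for j
    unfolding G_def by (intro sets.finite_UN near_shift_sets fin)
  have G_measure: "measure unit_square (G j) \<le> real (card (Delta'_n T (2 ^ Suc j))) * (8 * t j)" for j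
  proof -
    have "emeasure unit_square (G j)
        \<le> (\<Sum>\<delta>\<in>Delta'_n T (2 ^ Suc j). emeasure unit_square {p \<in> space unit_square. dnint (fst p - snd p + \<delta>) < t j})"
      unfolding G_def using fin by (intro emeasure_subadditive_finite) auto
    also have "\<dots> \<le> (\<Sum>\<delta>\<in>Delta'_n T (2 ^ Suc j). ennreal (8 * t j))"
      by (intro sum_mono emeasure_near_shift_le t) (use Delta'_n_subset_unit_interval in blast)
    also have "\<dots> = ennreal (real (card (Delta'_n T (2 ^ Suc j))) * (8 * t j))"
      using t(1)[of j] by (simp add: ennreal_of_nat_eq_real_of_nat ennreal_mult[symmetric])
    finally show ?thesis using t(1)[of j] by (simp add: P.emeasure_eq_measure)
  qed
  obtain N where N: "\<And>n. n \<ge> N \<Longrightarrow> real (card (Delta'_n T n)) \<le> real n powr \<beta>"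
    using card unfolding eventually_sequentially by blast
  define q where "q = (2::real) powr (\<beta> - \<alpha>)"
  have q: "0 \<le> q" "q < 1" unfolding q_def using \<open>\<beta> < \<alpha>\<close> by (auto intro: powr_less_one)
  have "summable (\<lambda>j. measure unit_square (G j))"
  proof (rule summable_comparison_test_ev)
    show "summable (\<lambda>j. (8 * 2 powr \<beta>) * q ^ j)" using q by (intro summable_mult summable_geometric) auto
    show "eventually (\<lambda>j. norm (measure unit_square (G j)) \<le> (8 * 2 powr \<beta>) * q ^ j) sequentially"
      using eventually_ge_at_top[of N]
    proof eventually_elim
      case (elim j)
      have "N \<le> 2 ^ Suc j" using elim less_exp[of "Suc j"] by linarith
      have "norm (measure unit_square (G j)) \<le> real (card (Delta'_n T (2 ^ Suc j))) * (8 * t j)"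
        using G_measure by simp
      also have "\<dots> \<le> real (2 ^ Suc j) powr \<beta> * (8 * t j)"
        using N[OF \<open>N \<le> 2 ^ Suc j\<close>] t(1)[of j] by (intro mult_right_mono) auto
      also have "\<dots> = 8 * (2 powr (real (Suc j) * \<beta>) * 2 powr (- \<alpha> * real j))"
        using of_nat_power_powr[of 2 "Suc j" \<beta>] by (simp add: t_def)
      also have "\<dots> = 8 * 2 powr (\<beta> + (\<beta> - \<alpha>) * real j)"
        by (simp add: powr_add[symmetric] algebra_simps)
      also have "\<dots> = (8 * 2 powr \<beta>) * q ^ j"
        unfolding q_def by (simp add: powr_add powr_realpow[symmetric] powr_powr mult.commute)
      finally show ?case .
    qed
  qed
  then have "AE p in unit_square. eventually (\<lambda>j. p \<in> space unit_square - G j) sequentially"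
    using G_sets by (intro borel_cantelli_AE1) (auto simp: P.emeasure_eq_measure)
  then show ?thesis
    by eventually_elim (auto elim!: eventually_mono simp: G_def t_def not_less)
qed

lemma dyadic_block:
  fixes n :: nat
  assumes "2 ^ J \<le> n"
  obtains j where "J \<le> j" "2 ^ j \<le> n" "n < 2 ^ Suc j"
proof -
  have "n \<ge> 1" using assms by (metis le_trans one_le_power one_le_numeral)
  then obtain j where j: "2 ^ j \<le> n" "n < 2 ^ Suc j" using ex_power_ivl1[of 2 n] by auto
  have "J \<le> j"
  proof (rule ccontr)
    assume "\<not> J \<le> j"
    then have "(2::nat) ^ Suc j \<le> 2 ^ J" by (intro power_increasing) auto
    then show False using j assms by linarith
  qed
  then show ?thesis using j by (rule that)
qed

lemma AE_liminf_ge_1: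
  assumes "\<And>n. finite (Delta'_n T n)"
    and "eventually (\<lambda>n. real (card (Delta'_n T n)) \<le> real n powr \<beta>) sequentially"
    and "\<beta> < \<alpha>" "0 < \<alpha>"
  shows "AE p in unit_square.
           1 \<le> liminf (\<lambda>n. ereal (real n powr \<alpha> * dnint ((T ^^ n) (fst p) - (T ^^ n) (snd p))))"
  using AE_eventually_far_from_Delta'_n[OF assms] AE_space
proof eventually_elim
  case (elim p)
  then obtain J where J: "\<And>j \<delta>. j \<ge> J \<Longrightarrow> \<delta> \<in> Delta'_n T (2 ^ Suc j) \<Longrightarrow>
      2 powr (- \<alpha> * real j) \<le> dnint (fst p - snd p + \<delta>)"
    unfolding eventually_sequentially by blast
  have xy: "fst p \<in> {0..<1}" "snd p \<in> {0..<1}" using elim(2) by (auto simp: space_unit_square)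
  have "eventually (\<lambda>n. ereal 1 \<le> ereal (real n powr \<alpha> * dnint ((T ^^ n) (fst p) - (T ^^ n) (snd p)))) sequentially"
    using eventually_ge_at_top[of "2 ^ J"]
  proof eventually_elim
    case (elim n)
    then obtain j where "J \<le> j" and j: "2 ^ j \<le> n" "n < 2 ^ Suc j" by (rule dyadic_block)
    have "n \<ge> 1" using j(1) by (metis le_trans one_le_power one_le_numeral)
    obtain \<delta> where \<delta>: "\<delta> \<in> Delta' (T ^^ n)"
      "dnint ((T ^^ n) (fst p) - (T ^^ n) (snd p)) = dnint (fst p - snd p + \<delta>)"
      using dnint_funpow_diff[OF xy] by blast
    have "\<delta> \<in> Delta'_n T (2 ^ Suc j)" unfolding Delta'_n_def using \<delta>(1) \<open>n \<ge> 1\<close> j(2) by auto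
    then have far: "2 powr (- \<alpha> * real j) \<le> dnint ((T ^^ n) (fst p) - (T ^^ n) (snd p))"
      using J[OF \<open>J \<le> j\<close>] \<delta>(2) by simp
    have "(2::real) powr real j \<le> real n"
      using j(1) by (simp add: powr_realpow flip: of_nat_le_iff)
    then have "(2 powr real j) powr \<alpha> \<le> real n powr \<alpha>" using \<open>0 < \<alpha>\<close> by (intro powr_mono2) auto
    then have "2 powr (\<alpha> * real j) \<le> real n powr \<alpha>" by (simp add: powr_powr mult.commute)
    have "1 = 2 powr (\<alpha> * real j) * 2 powr (- \<alpha> * real j)" by (simp add: powr_add[symmetric])
    also have "\<dots> \<le> real n powr \<alpha> * dnint ((T ^^ n) (fst p) - (T ^^ n) (snd p))"
      using \<open>2 powr (\<alpha> * real j) \<le> real n powr \<alpha>\<close> far by (intro mult_mono) auto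
    finally show ?case by simp
  qed
  then show ?case by (simp add: Liminf_bounded one_ereal_def)
qed

lemma C_psi_le_tau:
  assumes "\<And>n. finite (Delta'_n T n)" "0 \<le> tau T"
  shows "C_psi T \<le> tau T"
  unfolding C_psi_def
proof (rule Sup_least)
  fix a assume "a \<in> {0} \<union> {ereal \<alpha> |\<alpha>. 0 < \<alpha> \<and> (AE p in unit_square.
      liminf (\<lambda>n. ereal (real n powr \<alpha> * dnint ((T ^^ n) (fst p) - (T ^^ n) (snd p)))) = 0)}"
  then show "a \<le> tau T"
  proof
    assume "a \<in> {ereal \<alpha> |\<alpha>. 0 < \<alpha> \<and> (AE p in unit_square.
      liminf (\<lambda>n. ereal (real n powr \<alpha> * dnint ((T ^^ n) (fst p) - (T ^^ n) (snd p)))) = 0)}"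
    then obtain \<alpha> where a: "a = ereal \<alpha>" "0 < \<alpha>" and AE_0: "AE p in unit_square.
        liminf (\<lambda>n. ereal (real n powr \<alpha> * dnint ((T ^^ n) (fst p) - (T ^^ n) (snd p)))) = 0"
      by blast
    show ?thesis
    proof (rule ccontr)
      assume "\<not> a \<le> tau T"
      then have "tau T < ereal \<alpha>" using a(1) by simp
      then obtain \<beta> where \<beta>: "tau T < ereal \<beta>" "ereal \<beta> < ereal \<alpha>" using ereal_dense2 by blast
      have "eventually (\<lambda>n. real (card (Delta'_n T n)) \<le> real n powr \<beta>) sequentially"
        using \<beta>(1) unfolding tau_def by (rule eventually_le_powr_if_log_ratio_Limsup_less)
      moreover have "\<beta> < \<alpha>" using \<beta>(2) by simp
      ultimately have "AE p in unit_square. 1 \<le> liminf (\<lambda>n.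
          ereal (real n powr \<alpha> * dnint ((T ^^ n) (fst p) - (T ^^ n) (snd p))))"
        using assms(1) a(2) by (intro AE_liminf_ge_1)
      from this AE_0
      have "AE p in unit_square. False" by eventually_elim simp
      then show False using prob_space.AE_False[OF prob_space_unit_square] by simp
    qed
  qed (use assms(2) in simp)
qed

section \<open>Interval exchange transformations\<close>

lemma sum_weights_zero_shift:
  fixes m :: "'a \<Rightarrow> 'b::comm_ring"
  assumes "sum m A = 0"
  shows "(\<Sum>j\<in>A. m j * t j) = (\<Sum>j\<in>A. m j * (t j - c))"
  using assms by (simp add: right_diff_distrib sum_subtractf flip: sum_distrib_right)

locale interval_exchange =
  fixes r :: nat and \<pi> :: "nat \<Rightarrow> nat" and l :: "nat \<Rightarrow> real"
  assumes data: "is_iet_data r \<pi> l"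
begin

abbreviation T :: "real \<Rightarrow> real" where "T \<equiv> iet r \<pi> l"

lemma r_ge_1: "r \<ge> 1" using data by (simp add: is_iet_data_def)
lemma length_pos: "i \<in> {1..r} \<Longrightarrow> l i > 0" using data by (simp add: is_iet_data_def)
lemma lengths_sum: "(\<Sum>i\<in>{1..r}. l i) = 1" using data by (simp add: is_iet_data_def)

lemma iet_s_0: "iet_s l 0 = 0" by (simp add: iet_s_def)
lemma iet_s_Suc: "iet_s l (Suc k) = iet_s l k + l (Suc k)"
  by (simp add: iet_s_def add.commute)
lemma iet_s_r: "iet_s l r = 1" using lengths_sum by (simp add: iet_s_def)

lemma iet_s_strict_mono: "i < j \<Longrightarrow> j \<le> r \<Longrightarrow> iet_s l i < iet_s l j"
proof (induction j)
  case (Suc j)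
  have "l (Suc j) > 0" using Suc.prems by (intro length_pos) auto
  then show ?case using Suc by (cases "i = j") (auto simp: iet_s_Suc)
qed simp

lemma iet_s_mono: "i \<le> j \<Longrightarrow> j \<le> r \<Longrightarrow> iet_s l i \<le> iet_s l j"
  using iet_s_strict_mono by (cases "i = j") (auto simp: order.strict_implies_order)

lemma iet_s_diff: "k \<ge> 1 \<Longrightarrow> iet_s l k - iet_s l (k - 1) = l k"
  using iet_s_Suc[of "k - 1"] by simp

lemma sum_lengths_before: "k \<ge> 1 \<Longrightarrow> (\<Sum>i\<in>{1..<k}. l i) = iet_s l (k - 1)"
  unfolding iet_s_def by (rule sum.cong) auto

lemma ex1_interval_index:
  assumes "x \<in> {0..<1}"
  shows "\<exists>!k. k \<in> {1..r} \<and> iet_s l (k - 1) \<le> x \<and> x < iet_s l k"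
proof -
  have ex: "\<exists>k. x < iet_s l k" using assms iet_s_r by (intro exI[of _ r]) auto
  define k where "k = (LEAST k. x < iet_s l k)"
  have k1: "x < iet_s l k" unfolding k_def by (rule LeastI_ex[OF ex])
  have kr: "k \<le> r" unfolding k_def using assms iet_s_r by (intro Least_le) auto
  have k0: "k \<noteq> 0" using k1 assms iet_s_0 by (cases k) auto
  have k2: "iet_s l (k - 1) \<le> x"
    using not_less_Least[of "k - 1" "\<lambda>k. x < iet_s l k"] k0 by (simp add: k_def)
  show ?thesis
  proof (rule ex1I[of _ k])
    fix k' assume k': "k' \<in> {1..r} \<and> iet_s l (k' - 1) \<le> x \<and> x < iet_s l k'"
    show "k' = k"
    proof (rule linorder_cases[of k' k])
      assume "k' < k"
      then have "iet_s l k' \<le> iet_s l (k - 1)" using kr by (intro iet_s_mono) auto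
      then show ?thesis using k' k2 by auto
    next
      assume "k < k'"
      then have "iet_s l k \<le> iet_s l (k' - 1)" using k' by (intro iet_s_mono) auto
      then show ?thesis using k' k1 by auto
    qed
  qed (use k0 kr k1 k2 in auto)
qed

definition interval_index :: "real \<Rightarrow> nat" where
  "interval_index x = (THE k. k \<in> {1..r} \<and> iet_s l (k - 1) \<le> x \<and> x < iet_s l k)"

lemma interval_index:
  assumes "x \<in> {0..<1}"
  shows "interval_index x \<in> {1..r}" "iet_s l (interval_index x - 1) \<le> x" "x < iet_s l (interval_index x)"
  using theI'[OF ex1_interval_index[OF assms]] unfolding interval_index_def by auto

lemma interval_index_eq_iff:
  assumes "x \<in> {0..<1}" "j \<in> {1..r}"
  shows "interval_index x = j \<longleftrightarrow> x \<in> {iet_s l (j - 1)..<iet_s l j}"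
  using interval_index[OF assms(1)] ex1_interval_index[OF assms(1)] assms(2) by auto

definition translation :: "nat \<Rightarrow> real" where
  "translation k = (\<Sum>i\<in>{i\<in>{1..r}. \<pi> i < \<pi> k}. l i) - (\<Sum>i\<in>{1..<k}. l i)"

lemma iet_eq_translation: "x \<in> {0..<1} \<Longrightarrow> T x = x + translation (interval_index x)"
  unfolding iet_def translation_def interval_index_def[symmetric] Let_def by simp

lemma iet_in_unit_interval:
  assumes "x \<in> {0..<1}"
  shows "T x \<in> {0..<1}"
proof -
  define k where "k = interval_index x"
  have k: "k \<in> {1..r}" "iet_s l (k - 1) \<le> x" "x < iet_s l k"
    using interval_index[OF assms] by (auto simp: k_def)
  define A where "A = (\<Sum>i\<in>{i\<in>{1..r}. \<pi> i < \<pi> k}. l i)"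
  have "0 \<le> A" unfolding A_def by (intro sum_nonneg) (simp add: less_imp_le length_pos)
  have "A + l k = (\<Sum>i\<in>insert k {i\<in>{1..r}. \<pi> i < \<pi> k}. l i)"
    unfolding A_def by (subst sum.insert) auto
  also have "\<dots> \<le> (\<Sum>i\<in>{1..r}. l i)"
    using k by (intro sum_mono2) (auto simp: less_imp_le length_pos)
  finally have "A + l k \<le> 1" using lengths_sum by simp
  moreover have "T x = x - iet_s l (k - 1) + A"
    using iet_eq_translation[OF assms] sum_lengths_before[of k] k
    by (simp add: translation_def A_def k_def)
  moreover have "iet_s l k = iet_s l (k - 1) + l k" using iet_s_diff[of k] k by simp
  ultimately show ?thesis using k \<open>0 \<le> A\<close> by auto
qed

lemma funpow_iet_in_unit_interval: "x \<in> {0..<1} \<Longrightarrow> (T ^^ m) x \<in> {0..<1}"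
  by (rule funpow_in_unit_interval[OF iet_in_unit_interval])

definition visits :: "nat \<Rightarrow> real \<Rightarrow> nat \<Rightarrow> nat" where
  "visits j x k = card {m \<in> {..<k}. interval_index ((T ^^ m) x) = j}"

lemma visits_0 [simp]: "visits j x 0 = 0"
  by (simp add: visits_def)

lemma visits_Suc:
  "visits j x (Suc k) = visits j x k + (if interval_index ((T ^^ k) x) = j then 1 else 0)"
proof -
  have "{m \<in> {..<Suc k}. interval_index ((T ^^ m) x) = j}
      = (if interval_index ((T ^^ k) x) = j then insert k else id)
          {m \<in> {..<k}. interval_index ((T ^^ m) x) = j}"
    by (auto simp: less_Suc_eq)
  then show ?thesis by (simp add: visits_def)
qed

lemma sum_visits:
  assumes "x \<in> {0..<1}"
  shows "(\<Sum>j\<in>{1..r}. visits j x k) = k"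
proof (induction k)
  case (Suc k)
  have "interval_index ((T ^^ k) x) \<in> {1..r}"
    by (rule interval_index(1)[OF funpow_iet_in_unit_interval[OF assms]])
  then show ?case using Suc.IH by (simp add: visits_Suc sum.distrib)
qed simp

lemma funpow_iet_displacement:
  assumes "x \<in> {0..<1}"
  shows "(T ^^ k) x - x = (\<Sum>j\<in>{1..r}. real (visits j x k) * translation j)"
proof (induction k)
  case (Suc k)
  let ?i = "interval_index ((T ^^ k) x)"
  have i: "?i \<in> {1..r}" by (rule interval_index(1)[OF funpow_iet_in_unit_interval[OF assms]])
  have "(T ^^ Suc k) x - x = ((T ^^ k) x - x) + translation ?i"
    using iet_eq_translation[OF funpow_iet_in_unit_interval[OF assms]] by simp
  also have "\<dots> = (\<Sum>j\<in>{1..r}. real (visits j x k) * translation j + (if ?i = j then translation j else 0))"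
    using i by (simp add: Suc.IH sum.distrib)
  also have "\<dots> = (\<Sum>j\<in>{1..r}. real (visits j x (Suc k)) * translation j)"
    by (intro sum.cong refl) (simp add: visits_Suc distrib_right)
  finally show ?case .
qed simp

lemma real_visits_eq_indicator_sum:
  assumes "x \<in> {0..<1}" "j \<in> {1..r}"
  shows "real (visits j x k) = (\<Sum>m<k. indicator {iet_s l (j - 1)..<iet_s l j} ((T ^^ m) x))"
proof (induction k)
  case (Suc k)
  have "interval_index ((T ^^ k) x) = j \<longleftrightarrow> (T ^^ k) x \<in> {iet_s l (j - 1)..<iet_s l j}"
    by (rule interval_index_eq_iff[OF funpow_iet_in_unit_interval[OF assms(1)] assms(2)])
  then show ?case by (simp add: visits_Suc Suc.IH indicator_def)
qed simp

lemma visits_deviation: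
  assumes "x \<in> {0..<1}" "j \<in> {1..r}" "k \<ge> 1"
  shows "\<bar>real (visits j x k) - real k * l j\<bar> \<le> 2 * real k * discr T k"
proof -
  have "0 \<le> iet_s l (j - 1)" "iet_s l (j - 1) \<le> iet_s l j" "iet_s l j \<le> 1"
    using iet_s_mono[of 0 "j - 1"] iet_s_mono[of "j - 1" j] iet_s_mono[of j r] iet_s_0 iet_s_r assms(2)
    by auto
  from visits_deviation_le_discr[of T, OF iet_in_unit_interval assms(1,3) this]
  have "\<bar>real (visits j x k) - real k * (iet_s l j - iet_s l (j - 1))\<bar> \<le> 2 * real k * discr T k"
    unfolding real_visits_eq_indicator_sum[OF assms(1,2)] .
  moreover have "iet_s l j - iet_s l (j - 1) = l j" using assms(2) by (intro iet_s_diff) simp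
  ultimately show ?thesis by simp
qed

definition translation_combination :: "(nat \<Rightarrow> int) \<Rightarrow> real" where
  "translation_combination m = frac (\<Sum>j\<in>{1..<r}. of_int (m j) * (translation j - translation r))"

lemma Delta'_funpow_subset:
  assumes "k \<ge> 1" and B: "4 * real k * discr T k \<le> real_of_int B"
  shows "Delta' (T ^^ k) \<subseteq> translation_combination ` (\<Pi>\<^sub>E j\<in>{1..<r}. {-B..B})"
proof
  fix z assume "z \<in> Delta' (T ^^ k)"
  then obtain x y where xy: "x \<in> {0..<1}" "y \<in> {0..<1}" "z = ((T ^^ k) x \<ominus> x) \<ominus> ((T ^^ k) y \<ominus> y)"
    unfolding Delta'_def Delta_def by blast
  define m where "m j = int (visits j x k) - int (visits j y k)" for j
  \<comment> \<open>both orbit segments have length \<open>k\<close>, so the \<open>m j\<close> sum to zero and \<open>translation r\<close> can be eliminated\<close>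
  have m_sum: "(\<Sum>j\<in>{1..r}. real_of_int (m j)) = 0"
    using sum_visits[OF xy(1), of k] sum_visits[OF xy(2), of k]
    by (simp add: m_def sum_subtractf flip: of_nat_sum)
  have "z = frac ((T ^^ k) x - x - ((T ^^ k) y - y))"
    unfolding xy(3) msub_def by (rule frac_diff_frac)
  also have "(T ^^ k) x - x - ((T ^^ k) y - y) = (\<Sum>j\<in>{1..r}. of_int (m j) * translation j)"
    unfolding funpow_iet_displacement[OF xy(1)] funpow_iet_displacement[OF xy(2)] m_def
    by (simp add: sum_subtractf algebra_simps)
  also have "\<dots> = (\<Sum>j\<in>{1..r}. of_int (m j) * (translation j - translation r))"
    by (rule sum_weights_zero_shift[OF m_sum])
  also have "\<dots> = (\<Sum>j\<in>{1..<r}. of_int (m j) * (translation j - translation r))"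
    by (rule sum.mono_neutral_right) auto
  finally have "z = translation_combination (restrict m {1..<r})"
    unfolding translation_combination_def by simp
  moreover have "restrict m {1..<r} \<in> (\<Pi>\<^sub>E j\<in>{1..<r}. {-B..B})"
  proof (rule restrict_PiE_iff[THEN iffD2], intro ballI)
    fix j assume "j \<in> {1..<r}"
    then have "\<bar>real (visits j x k) - real k * l j\<bar> \<le> 2 * real k * discr T k"
      and "\<bar>real (visits j y k) - real k * l j\<bar> \<le> 2 * real k * discr T k"
      using xy assms(1) by (auto intro: visits_deviation)
    then have "\<bar>real_of_int (m j)\<bar> \<le> real_of_int B" using B by (simp add: m_def abs_le_iff)
    then show "m j \<in> {-B..B}" by auto
  qed
  ultimately show "z \<in> translation_combination ` (\<Pi>\<^sub>E j\<in>{1..<r}. {-B..B})" by blast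
qed

lemma card_Delta'_n_le:
  assumes "\<And>k. k \<in> {1..n} \<Longrightarrow> 4 * real k * discr T k \<le> real_of_int B"
  shows "finite (Delta'_n T n)" "card (Delta'_n T n) \<le> nat (2 * B + 1) ^ (r - 1)"
proof -
  have sub: "Delta'_n T n \<subseteq> translation_combination ` (\<Pi>\<^sub>E j\<in>{1..<r}. {-B..B})"
    unfolding Delta'_n_def using Delta'_funpow_subset assms by fastforce
  have fin: "finite (\<Pi>\<^sub>E j\<in>{1..<r}. {-B..B})" by (intro finite_PiE) auto
  then show "finite (Delta'_n T n)" using finite_subset[OF sub finite_imageI] by blast
  have "card (Delta'_n T n) \<le> card (\<Pi>\<^sub>E j\<in>{1..<r}. {-B..B})"
    using sub fin by (meson card_image_le card_mono finite_imageI le_trans)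
  also have "\<dots> = nat (2 * B + 1) ^ (r - 1)" by (simp add: card_PiE)
  finally show "card (Delta'_n T n) \<le> nat (2 * B + 1) ^ (r - 1)" .
qed

definition discr_budget :: "nat \<Rightarrow> int" where
  "discr_budget n = \<lceil>\<Sum>k\<in>{1..n}. 4 * real k * discr T k\<rceil>"

lemma discr_le_budget: "k \<in> {1..n} \<Longrightarrow> 4 * real k * discr T k \<le> real_of_int (discr_budget n)"
proof -
  assume "k \<in> {1..n}"
  then have "4 * real k * discr T k \<le> (\<Sum>k\<in>{1..n}. 4 * real k * discr T k)"
    by (intro member_le_sum) (auto intro!: mult_nonneg_nonneg discr_nonneg)
  then show ?thesis unfolding discr_budget_def by linarith
qed

lemma finite_Delta'_n: "finite (Delta'_n T n)"
  by (rule card_Delta'_n_le(1)[OF discr_le_budget])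

lemma card_Delta'_n_ge_1: "n \<ge> 1 \<Longrightarrow> 1 \<le> card (Delta'_n T n)"
  using zero_mem_Delta'_n finite_Delta'_n by (metis One_nat_def Suc_leI card_gt_0_iff empty_iff)

lemma tau_nonneg: "0 \<le> tau T"
  unfolding tau_def
proof (rule log_ratio_Limsup_nonneg)
  show "eventually (\<lambda>n. 1 \<le> real (card (Delta'_n T n))) sequentially"
    using eventually_ge_at_top[of 1] by eventually_elim (use card_Delta'_n_ge_1 in simp)
qed

lemma tau_le_0_if_single_interval:
  assumes "r = 1"
  shows "tau T \<le> 0"
proof -
  have "ereal (ln (real (card (Delta'_n T n))) / ln (real n)) \<le> 0" for n
  proof -
    have "card (Delta'_n T n) \<le> 1"
      using card_Delta'_n_le(2)[of n "discr_budget n", OF discr_le_budget] assms by simp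
    then have "card (Delta'_n T n) = 0 \<or> card (Delta'_n T n) = 1" by linarith
    then show ?thesis by auto
  qed
  then show ?thesis unfolding tau_def by (intro Limsup_bounded always_eventually) simp
qed

lemma card_Delta'_n_le_powr:
  assumes "K \<ge> 0" "\<beta> \<ge> 0" "n \<ge> 1"
    and K: "\<And>k. k \<le> n \<Longrightarrow> real k * discr T k \<le> K + real n powr \<beta>"
  shows "real (card (Delta'_n T n)) \<le> (8 * K + 11) ^ (r - 1) * real n powr (real (r - 1) * \<beta>)"
proof -
  have p: "1 \<le> real n powr \<beta>" using assms(2,3) by (intro ge_one_powr_ge_zero) auto
  define B where "B = \<lceil>4 * (K + real n powr \<beta>)\<rceil>"
  have "4 * real k * discr T k \<le> real_of_int B" if "k \<in> {1..n}" for k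
  proof -
    have "4 * real k * discr T k \<le> 4 * (K + real n powr \<beta>)" using K[of k] that by simp
    then show ?thesis using le_of_int_ceiling[of "4 * (K + real n powr \<beta>)"] unfolding B_def by linarith
  qed
  then have card: "card (Delta'_n T n) \<le> nat (2 * B + 1) ^ (r - 1)" by (rule card_Delta'_n_le(2))
  have "0 \<le> B" unfolding B_def using assms(1) p by simp
  then have "real (nat (2 * B + 1)) = 2 * real_of_int B + 1" by simp
  also have "\<dots> \<le> 8 * (K + real n powr \<beta>) + 3" unfolding B_def by linarith
  also have "\<dots> \<le> (8 * K + 11) * real n powr \<beta>"
  proof -
    have "K \<le> K * real n powr \<beta>" using mult_left_mono[OF p assms(1)] by simp
    moreover have "(8 * K + 11) * real n powr \<beta> = 8 * (K * real n powr \<beta>) + 11 * real n powr \<beta>"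
      by (simp add: algebra_simps)
    ultimately show ?thesis using p by (smt (verit))
  qed
  finally have bound: "real (nat (2 * B + 1)) \<le> (8 * K + 11) * real n powr \<beta>" .
  have "real (card (Delta'_n T n)) \<le> real (nat (2 * B + 1)) ^ (r - 1)"
    using card by (metis of_nat_le_iff of_nat_power)
  also have "\<dots> \<le> ((8 * K + 11) * real n powr \<beta>) ^ (r - 1)" using bound by (intro power_mono) auto
  also have "\<dots> = (8 * K + 11) ^ (r - 1) * real n powr (real (r - 1) * \<beta>)"
    unfolding power_mult_distrib using assms(3) by (subst powr_power) auto
  finally show ?thesis .
qed

lemma tau_le_if_omega_less:
  assumes "omega T < ereal \<beta>" "\<beta> > 0"
  shows "tau T \<le> ereal (real (r - 1) * \<beta>)"
proof -
  have "eventually (\<lambda>k. real k * discr T k \<le> real k powr \<beta>) sequentially"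
    using assms(1) unfolding omega_def by (rule eventually_le_powr_if_log_ratio_Limsup_less)
  then obtain K where K: "K \<ge> 0" "\<And>k n. k \<le> n \<Longrightarrow> real k * discr T k \<le> K + real n powr \<beta>"
    using assms(2) bound_by_powr_if_eventually[of "\<lambda>k. real k * discr T k" \<beta>] by auto
  have "eventually (\<lambda>n. 0 < real (card (Delta'_n T n)) \<and>
      real (card (Delta'_n T n)) \<le> (8 * K + 11) ^ (r - 1) * real n powr (real (r - 1) * \<beta>)) sequentially"
    using eventually_ge_at_top[of 1]
  proof eventually_elim
    case (elim n)
    show ?case
      using card_Delta'_n_ge_1[OF elim] card_Delta'_n_le_powr[OF K(1) _ elim K(2)] assms(2) by simp
  qed
  then show ?thesis
    unfolding tau_def by (rule log_ratio_Limsup_le_if_le_powr[rotated]) (use K(1) in simp)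
qed

lemma tau_le_omega: "tau T \<le> ereal (real r - 1) * omega T"
proof (cases "omega T")
  case (real w)
  have "0 \<le> w" using omega_nonneg[of T] real by simp
  have r1: "real (r - 1) = real r - 1" using r_ge_1 by simp
  have "tau T \<le> ereal ((real r - 1) * w)"
  proof (rule ereal_le_epsilon2)
    fix e :: real assume "0 < e"
    define \<beta> where "\<beta> = w + e / real r"
    have "0 < e / real r" using \<open>0 < e\<close> r_ge_1 by simp
    then have "omega T < ereal \<beta>" "0 < \<beta>" using \<open>0 \<le> w\<close> real by (auto simp: \<beta>_def)
    then have "tau T \<le> ereal (real (r - 1) * \<beta>)" by (rule tau_le_if_omega_less)
    also have "real (r - 1) * \<beta> \<le> (real r - 1) * w + e"
      using \<open>0 < e\<close> r_ge_1 by (simp add: \<beta>_def r1 field_simps)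
    finally show "tau T \<le> ereal ((real r - 1) * w) + ereal e" by simp
  qed
  then show ?thesis using real by simp
next
  case PInf
  show ?thesis
  proof (cases "r = 1")
    case True
    then show ?thesis using tau_le_0_if_single_interval PInf by simp
  next
    case False
    then show ?thesis using PInf r_ge_1 by simp
  qed
qed (use omega_nonneg[of T] in simp)

end

theorem theorem11p7:
  fixes r :: nat and \<pi> :: "nat \<Rightarrow> nat" and l :: "nat \<Rightarrow> real" and T :: "real \<Rightarrow> real"
  assumes "is_iet_data r \<pi> l"
    and "T = iet r \<pi> l"
  shows "C_psi T \<le> tau T \<and> tau T \<le> ereal (real r - 1) * omega T
     \<and> (omega T = 0 \<longrightarrow> tau T = 0 \<and> C_psi T = 0)"
proof -
  interpret interval_exchange r \<pi> l by unfold_locales (rule assms(1))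
  have "0 \<le> tau T" unfolding assms(2) by (rule tau_nonneg)
  moreover have "C_psi T \<le> tau T"
    unfolding assms(2) by (rule C_psi_le_tau[OF finite_Delta'_n tau_nonneg])
  moreover have "tau T \<le> ereal (real r - 1) * omega T" unfolding assms(2) by (rule tau_le_omega)
  moreover have "0 \<le> C_psi T" unfolding C_psi_def by (rule Sup_upper) simp
  ultimately show ?thesis by auto
qed

end
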